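(* Let $D$ be a rank two filtered $(\varphi,N,L/K,E)$-module and let $\underline\eta$ be a standard basis of $D$ (chosen as in Corollary 2.6 when $N\neq0$). Then: (1) If $D$ is F-semisimple and not F-scalar: (a) if $N\neq0$, there is a character $\chi:G\to E^\times$ with $[g]_{\underline\eta}=\mathrm{diag}(\chi(g)\cdot\vec1,\chi(g)\cdot\vec1)$ for all $g\in G$; (b) if $N=0$, there are characters $\chi,\psi:G\to E^\times$ with $[g]_{\underline\eta}=\mathrm{diag}(\chi(g)\cdot\vec1,\psi(g)\cdot\vec1)$ for all $g\in G$. (2) If $D$ is F-scalar, there is a group homomorphism $\lambda:G\to GL_2(E)$ with $[g]_{\underline\eta}=\lambda(g)\cdot\mathrm{diag}(\vec1,\vec1)$ for all $g\in G$ (i.e. the $(r,s)$ entry of $[g]_{\underline\eta}$ is $\lambda(g)_{rs}\cdot\vec1$). (3) If $D$ is non-F-semisimple, there is a character $\chi:G\to E^\times$ with $[g]_{\underline\eta}=\mathrm{diag}(\chi(g)\cdot\vec1,\chi(g)\cdot\vec1)$ for all $g\in G$.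
   Context: $p$ prime; $K/\mathbb{Q}_p$ finite; $L/K$ finite Galois with $G=\mathrm{Gal}(L/K)$; $L_0$ the maximal unramified subextension of $L/\mathbb{Q}_p$, $f=[L_0:\mathbb{Q}_p]$, $\tau$ the absolute Frobenius of $L_0$; $E$ a finite extension of $\mathbb{Q}_p$ containing the images of all embeddings of $L$. Fix $\iota:L_0\hookrightarrow E$ and $\tau_j=\iota\circ\tau^j$; then $L_0\otimes_{\mathbb{Q}_p}E\cong E^f$ via $x\otimes y\mapsto(\tau_j(x)y)_j$, and $\tau\otimes1$ becomes $\varphi(x_0,\dots,x_{f-1})=(x_1,\dots,x_{f-1},x_0)$. For $g\in G$ let $n(g)\in\{0,\dots,f-1\}$ with $g|_{L_0}=\tau^{n(g)}$; $G$ acts on $E^f$ by $g(a_0,\dots,a_{f-1})=(a_{n(g)},a_{n(g)+1},\dots,a_{n(g)+f-1})$ (indices mod $f$). A rank two filtered $(\varphi,N,L/K,E)$-module is a free $E^f$-module $D$ of rank 2 with: an additive bijection $\varphi$ with $\varphi(ad)=\varphi(a)\varphi(d)$; a nilpotent $E^f$-linear $N$ with $N\varphi=p\varphi N$; a decreasing exhaustive separated filtration on $D_L=L\otimes_{L_0}D$; and an $E$-linear action of $G$ on $D$ with $g(ad)=g(a)g(d)$, commuting with $\varphi$ and $N$ and (after extension to $D_L$) preserving the filtration. Matrices: $(T\eta_1,T\eta_2)=(\eta_1,\eta_2)[T]_{\underline\eta}$. $D$ is F-semisimple / F-scalar / non-F-semisimple according as the $E^f$-linear map $\varphi^f$ is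 semisimple / a scalar in $E^\times$ / not semisimple. A standard basis is one in which $[\varphi]$ is $\mathrm{diag}(\alpha\cdot\vec1,\delta\cdot\vec1)$ with $\alpha^f\ne\delta^f$, or $\mathrm{diag}(\alpha\cdot\vec1,\alpha\cdot\vec1)$, or $\begin{pmatrix}\alpha\cdot\vec1&\vec0\\ \vec1&\alpha\cdot\vec1\end{pmatrix}$ ($\alpha,\delta\in E^\times$); when $N\ne0$ it is moreover chosen with $[\varphi]=\mathrm{diag}(p\delta\cdot\vec1,\delta\cdot\vec1)$ and $[N]=\begin{pmatrix}\vec0&\vec0\\ \vec1&\vec0\end{pmatrix}$. $c\cdot\vec1=(c,\dots,c)$. *)

theory Defs
  imports "HOL-Algebra.Group" "HOL-Computational_Algebra.Polynomial" "HOL-Computational_Algebra.Squarefree"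
begin

text \<open>The ring E^f is modelled as f-periodic sequences nat => E
  (component j of (a_0,...,a_{f-1}) is a (j mod f)).  The rank two free E^f-module D
  with basis eta = (eta1, eta2) is modelled by its coordinates: pairs of elements of E^f.\<close>

type_synonym 'e ef = "nat \<Rightarrow> 'e"
type_synonym 'e dm = "'e ef \<times> 'e ef"

definition Ef :: "nat \<Rightarrow> 'e ef set" where
  "Ef f = {a. \<forall>j. a (j + f) = a j}"

definition Dm :: "nat \<Rightarrow> 'e dm set" where
  "Dm f = Ef f \<times> Ef f"

text \<open>shift k (a_0,...,a_{f-1}) = (a_k, a_{k+1}, ..., a_{k+f-1}); the Frobenius on E^f
  is shift 1, and g in G acts on E^f by shift (n g).\<close>
definition shift :: "nat \<Rightarrow> 'e ef \<Rightarrow> 'e ef" where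
  "shift k a = (\<lambda>j. a (j + k))"

definition cvec :: "'e \<Rightarrow> 'e ef" where
  "cvec c = (\<lambda>j. c)"

definition add_d :: "'e::plus dm \<Rightarrow> 'e dm \<Rightarrow> 'e dm" where
  "add_d d d' = ((\<lambda>j. fst d j + fst d' j), (\<lambda>j. snd d j + snd d' j))"

definition smult_d :: "'e::times ef \<Rightarrow> 'e dm \<Rightarrow> 'e dm" where
  "smult_d a d = ((\<lambda>j. a j * fst d j), (\<lambda>j. a j * snd d j))"

definition zero_d :: "'e::zero dm" where
  "zero_d = (cvec 0, cvec 0)"

definition eta1 :: "'e::{zero,one} dm" where "eta1 = (cvec 1, cvec 0)"
definition eta2 :: "'e::{zero,one} dm" where "eta2 = (cvec 0, cvec 1)"

text \<open>Matrix [T] w.r.t. eta: (T eta1, T eta2) = (eta1, eta2) [T], indices r,s in {1,2};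
  entries are elements of E^f.\<close>
definition matr :: "('e::{zero,one} dm \<Rightarrow> 'e dm) \<Rightarrow> nat \<Rightarrow> nat \<Rightarrow> 'e ef" where
  "matr T r s = (if r \<in> {1,2} \<and> s \<in> {1,2}
      then (if r = 1 then fst else snd) (T (if s = 1 then eta1 else eta2))
      else cvec 0)"

definition mat2 :: "'e::zero ef \<Rightarrow> 'e ef \<Rightarrow> 'e ef \<Rightarrow> 'e ef \<Rightarrow> nat \<Rightarrow> nat \<Rightarrow> 'e ef" where
  "mat2 a b c d r s = (if r = 1 \<and> s = 1 then a else if r = 1 \<and> s = 2 then b
      else if r = 2 \<and> s = 1 then c else if r = 2 \<and> s = 2 then d else cvec 0)"

definition phiN_mod :: "nat \<Rightarrow> nat \<Rightarrow> ('g, 'b) monoid_scheme \<Rightarrow> ('g \<Rightarrow> nat)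
    \<Rightarrow> ('e::field dm \<Rightarrow> 'e dm) \<Rightarrow> ('e dm \<Rightarrow> 'e dm) \<Rightarrow> ('g \<Rightarrow> 'e dm \<Rightarrow> 'e dm) \<Rightarrow> bool" where
  "phiN_mod p f G n Phi N act \<longleftrightarrow>
     f \<ge> 1 \<and> group G \<and> finite (carrier G) \<and>
     \<comment> \<open>phi: additive bijection, semilinear w.r.t. the Frobenius of E^f\<close>
     bij_betw Phi (Dm f) (Dm f) \<and>
     (\<forall>d\<in>Dm f. \<forall>d'\<in>Dm f. Phi (add_d d d') = add_d (Phi d) (Phi d')) \<and>
     (\<forall>a\<in>Ef f. \<forall>d\<in>Dm f. Phi (smult_d a d) = smult_d (shift 1 a) (Phi d)) \<and>
     \<comment> \<open>N: nilpotent E^f-linear, N phi = p phi N\<close>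
     N ` Dm f \<subseteq> Dm f \<and>
     (\<forall>d\<in>Dm f. \<forall>d'\<in>Dm f. N (add_d d d') = add_d (N d) (N d')) \<and>
     (\<forall>a\<in>Ef f. \<forall>d\<in>Dm f. N (smult_d a d) = smult_d a (N d)) \<and>
     (\<exists>k. \<forall>d\<in>Dm f. (N ^^ k) d = zero_d) \<and>
     (\<forall>d\<in>Dm f. N (Phi d) = smult_d (cvec (of_nat p)) (Phi (N d))) \<and>
     \<comment> \<open>g restricted to L_0 is tau^(n g)\<close>
     (\<forall>g\<in>carrier G. n g < f) \<and>
     (\<forall>g\<in>carrier G. \<forall>h\<in>carrier G. n (g \<otimes>\<^bsub>G\<^esub> h) = (n g + n h) mod f) \<and>
     \<comment> \<open>E-linear, semilinear action of G commuting with phi and N\<close>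
     (\<forall>g\<in>carrier G.
        act g ` Dm f \<subseteq> Dm f \<and>
        (\<forall>d\<in>Dm f. \<forall>d'\<in>Dm f. act g (add_d d d') = add_d (act g d) (act g d')) \<and>
        (\<forall>c. \<forall>d\<in>Dm f. act g (smult_d (cvec c) d) = smult_d (cvec c) (act g d)) \<and>
        (\<forall>a\<in>Ef f. \<forall>d\<in>Dm f. act g (smult_d a d) = smult_d (shift (n g) a) (act g d)) \<and>
        (\<forall>d\<in>Dm f. act g (Phi d) = Phi (act g d)) \<and>
        (\<forall>d\<in>Dm f. act g (N d) = N (act g d))) \<and>
     (\<forall>d\<in>Dm f. act \<one>\<^bsub>G\<^esub> d = d) \<and>
     (\<forall>g\<in>carrier G. \<forall>h\<in>carrier G. \<forall>d\<in>Dm f. act (g \<otimes>\<^bsub>G\<^esub> h) d = act g (act h d))"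

definition N_nonzero :: "nat \<Rightarrow> ('e::zero dm \<Rightarrow> 'e dm) \<Rightarrow> bool" where
  "N_nonzero f N \<longleftrightarrow> (\<exists>d\<in>Dm f. N d \<noteq> zero_d)"

definition op_poly :: "'e::comm_ring_1 poly \<Rightarrow> ('e dm \<Rightarrow> 'e dm) \<Rightarrow> 'e dm \<Rightarrow> 'e dm" where
  "op_poly q T d = ((\<lambda>j. \<Sum>i\<le>degree q. coeff q i * fst ((T ^^ i) d) j),
                    (\<lambda>j. \<Sum>i\<le>degree q. coeff q i * snd ((T ^^ i) d) j))"

text \<open>phi^f semisimple: its minimal polynomial over E is squarefree, i.e. it is killed by
  a nonzero squarefree polynomial.\<close>
definition F_semisimple :: "nat \<Rightarrow> ('e::field dm \<Rightarrow> 'e dm) \<Rightarrow> bool" where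
  "F_semisimple f Phi \<longleftrightarrow>
     (\<exists>q::'e poly. q \<noteq> 0 \<and> squarefree q \<and> (\<forall>d\<in>Dm f. op_poly q (Phi ^^ f) d = zero_d))"

definition F_scalar :: "nat \<Rightarrow> ('e::field dm \<Rightarrow> 'e dm) \<Rightarrow> bool" where
  "F_scalar f Phi \<longleftrightarrow> (\<exists>c. c \<noteq> 0 \<and> (\<forall>d\<in>Dm f. (Phi ^^ f) d = smult_d (cvec c) d))"

definition std_basis :: "nat \<Rightarrow> nat \<Rightarrow> ('e::field dm \<Rightarrow> 'e dm) \<Rightarrow> ('e dm \<Rightarrow> 'e dm) \<Rightarrow> bool" where
  "std_basis p f Phi N \<longleftrightarrow>
     ((\<exists>\<alpha> \<delta>. \<alpha> \<noteq> 0 \<and> \<delta> \<noteq> 0 \<and> \<alpha> ^ f \<noteq> \<delta> ^ f \<and>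
          matr Phi = mat2 (cvec \<alpha>) (cvec 0) (cvec 0) (cvec \<delta>)) \<or>
      (\<exists>\<alpha>. \<alpha> \<noteq> 0 \<and> matr Phi = mat2 (cvec \<alpha>) (cvec 0) (cvec 0) (cvec \<alpha>)) \<or>
      (\<exists>\<alpha>. \<alpha> \<noteq> 0 \<and> matr Phi = mat2 (cvec \<alpha>) (cvec 0) (cvec 1) (cvec \<alpha>))) \<and>
     (N_nonzero f N \<longrightarrow>
        (\<exists>\<delta>. \<delta> \<noteq> 0 \<and> matr Phi = mat2 (cvec (of_nat p * \<delta>)) (cvec 0) (cvec 0) (cvec \<delta>) \<and>
              matr N = mat2 (cvec 0) (cvec 0) (cvec 1) (cvec 0)))"

definition is_character :: "('g, 'b) monoid_scheme \<Rightarrow> ('g \<Rightarrow> 'e::field) \<Rightarrow> bool" where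
  "is_character G \<chi> \<longleftrightarrow> (\<forall>g\<in>carrier G. \<chi> g \<noteq> 0) \<and>
     (\<forall>g\<in>carrier G. \<forall>h\<in>carrier G. \<chi> (g \<otimes>\<^bsub>G\<^esub> h) = \<chi> g * \<chi> h)"

definition is_GL2_hom :: "('g, 'b) monoid_scheme \<Rightarrow> ('g \<Rightarrow> nat \<Rightarrow> nat \<Rightarrow> 'e::field) \<Rightarrow> bool" where
  "is_GL2_hom G L \<longleftrightarrow>
     (\<forall>g\<in>carrier G. L g 1 1 * L g 2 2 - L g 1 2 * L g 2 1 \<noteq> 0) \<and>
     (\<forall>g\<in>carrier G. \<forall>h\<in>carrier G. \<forall>r\<in>{1,2}. \<forall>s\<in>{1,2}.
        L (g \<otimes>\<^bsub>G\<^esub> h) r s = (\<Sum>t\<in>{1,2}. L g r t * L h t s))"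

end

theory Submission
  imports Defs "HOL-Algebra.Multiplicative_Group"
begin

(* In the standard basis eta the Frobenius Phi has a matrix A with entries in E,
   while the matrix [g] of g in G has entries in E^f, i.e. f-periodic sequences.  Since Phi is
   semilinear for the cyclic shift of coordinates, the relation g Phi = Phi g becomes
   [g](j+1) A = A [g](j) for all j, so every entry of [g] is a periodic sequence obeying a
   linear recurrence dictated by A.  For the three standard shapes of A this forces:
     - A = diag(alpha, delta), alpha^f <> delta^f: [g] is a constant diagonal matrix;
     - A scalar: [g] is a constant matrix;
     - A a Jordan block: [g] is constant, lower triangular with equal diagonal entries, and
       then diagonal, as a unipotent matrix of finite order in characteristic 0 is trivial.
   In every case g |-> [g] is a 2x2 matrix representation of G, hence lands in GL_2(E), and its
   diagonal entries are characters when it is diagonal.  If N <> 0, commuting with N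
   identifies the two diagonal entries.  Finally a diagonal A makes D F-semisimple and a scalar
   A makes it F-scalar, which sorts the standard shapes into the cases of the proposition. *)


section \<open>Periodic sequences and powers of eigenvalues\<close>

lemma recurrence_const:
  assumes "\<forall>j. u (Suc j) = u j"
  shows "u j = u 0"
  using assms by (induct j) auto

lemma periodic_geometric_zero:
  fixes u :: "nat \<Rightarrow> 'e::field"
  assumes step: "\<forall>j. u (Suc j) = r * u j" and per: "u \<in> Ef f" and root: "r ^ f \<noteq> 1"
  shows "u j = 0"
proof -
  have "u (j + k) = r ^ k * u j" for k by (induct k) (use step in auto)
  moreover have "u (j + f) = u j" using per by (simp add: Ef_def)
  ultimately have "u j = r ^ f * u j" by simp
  hence "(1 - r ^ f) * u j = 0" by (simp add: algebra_simps)
  thus ?thesis using root by simp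
qed

lemma periodic_arithmetic_zero:
  fixes u :: "nat \<Rightarrow> 'e::field_char_0"
  assumes step: "\<forall>j. u (Suc j) = u j + b" and per: "u \<in> Ef f" and f: "f \<ge> 1"
  shows "b = 0"
proof -
  have progression: "u k = u 0 + of_nat k * b" for k
    by (induct k) (use step in \<open>auto simp: algebra_simps\<close>)
  have "u (0 + f) = u 0" using per by (simp only: Ef_def mem_Collect_eq)
  hence "of_nat f * b = 0" using progression[of f] by simp
  thus ?thesis using f by simp
qed

text \<open>(p delta)^f differs from delta^f, so the standard basis for N \<noteq> 0 has distinct
  Frobenius eigenvalues in the sense of the first standard shape.\<close>
lemma prime_times_pow_ne:
  fixes \<delta> :: "'e::field_char_0"
  assumes p: "prime p" and f: "f \<ge> 1" and d: "\<delta> \<noteq> 0"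
  shows "(of_nat p * \<delta>) ^ f \<noteq> \<delta> ^ f"
proof
  assume "(of_nat p * \<delta>) ^ f = \<delta> ^ f"
  hence "of_nat (p ^ f) * \<delta> ^ f = 1 * \<delta> ^ f" by (simp add: power_mult_distrib)
  hence "p ^ f = 1" using d by (metis mult_cancel_right of_nat_eq_1_iff power_not_zero)
  thus False using p f by (simp add: prime_gt_1_nat)
qed


section \<open>Squarefree polynomials\<close>

lemma sq_dvd_imp_dvd_pderiv:
  fixes x q :: "'a::field poly"
  assumes "x^2 dvd q"
  shows "x dvd pderiv q"
proof -
  obtain k where k: "q = x^2 * k" using assms by blast
  have "pderiv q = x * (x * pderiv k + 2 * pderiv x * k)"
    unfolding k power2_eq_square by (simp add: pderiv_mult algebra_simps)
  thus ?thesis by simp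
qed

lemma squarefree_linear: "squarefree [:-a, 1::'a::field:]"
proof (rule squarefreeI)
  fix x assume "x^2 dvd [:-a, 1:]"
  hence "x dvd pderiv [:-a, 1:]" by (rule sq_dvd_imp_dvd_pderiv)
  thus "x dvd 1" by (simp add: pderiv_pCons one_pCons[symmetric])
qed

text \<open>A product of two distinct linear factors is squarefree: a square factor would divide
  the discriminant-like combination 4q - q'^2 = -(a-b)^2, a unit.\<close>
lemma squarefree_two_linear:
  fixes a b :: "'a::field"
  assumes "a \<noteq> b"
  shows "squarefree ([:-a, 1:] * [:-b, 1:])"
proof (rule squarefreeI)
  let ?q = "[:-a, 1:] * [:-b, 1:]"
  fix x assume x: "x^2 dvd ?q"
  have "x dvd ?q" using x dvd_trans[of x "x^2"] by (simp add: power2_eq_square)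
  hence "x dvd Polynomial.smult 4 ?q - pderiv ?q * pderiv ?q"
    using sq_dvd_imp_dvd_pderiv[OF x] by (metis dvd_diff dvd_smult dvd_mult2)
  also have "Polynomial.smult 4 ?q - pderiv ?q * pderiv ?q = [:-((a-b)^2):]"
    by (simp add: pderiv_pCons pderiv_mult algebra_simps power2_eq_square)
  finally have "x dvd [:-((a-b)^2):]" .
  moreover have "is_unit [:-((a-b)^2):]"
    using assms by (simp add: is_unit_const_poly_iff dvd_field_iff)
  ultimately show "x dvd 1" using dvd_unit_imp_unit by blast
qed


section \<open>Two-dimensional matrix representations of groups\<close>

definition matrix_rep :: "('g, 'b) monoid_scheme \<Rightarrow> ('g \<Rightarrow> nat \<Rightarrow> nat \<Rightarrow> 'e::comm_ring_1) \<Rightarrow> bool" where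
  "matrix_rep G L \<longleftrightarrow>
     (\<forall>g\<in>carrier G. \<forall>h\<in>carrier G. \<forall>r\<in>{1,2}. \<forall>s\<in>{1,2}.
        L (g \<otimes>\<^bsub>G\<^esub> h) r s = L g r 1 * L h 1 s + L g r 2 * L h 2 s) \<and>
     L \<one>\<^bsub>G\<^esub> 1 1 = 1 \<and> L \<one>\<^bsub>G\<^esub> 1 2 = 0 \<and> L \<one>\<^bsub>G\<^esub> 2 1 = 0 \<and> L \<one>\<^bsub>G\<^esub> 2 2 = 1"

lemma det2_mult:
  fixes a11 a12 a21 a22 b11 b12 b21 b22 :: "'a::comm_ring_1"
  shows "(a11*a22 - a12*a21) * (b11*b22 - b12*b21) =
    (a11*b11 + a12*b21) * (a21*b12 + a22*b22) - (a11*b12 + a12*b22) * (a21*b11 + a22*b21)"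
  by (simp add: algebra_simps)

text \<open>A matrix representation of a group takes invertible values: det L(g) det L(g^-1) = 1.\<close>
lemma matrix_rep_GL2_hom:
  fixes L :: "'g \<Rightarrow> nat \<Rightarrow> nat \<Rightarrow> 'e::field"
  assumes G: "group G" and L: "matrix_rep G L"
  shows "is_GL2_hom G L"
proof -
  have det: "L g 1 1 * L g 2 2 - L g 1 2 * L g 2 1 \<noteq> 0" if g: "g \<in> carrier G" for g
  proof -
    interpret group G by (rule G)
    let ?i = "inv\<^bsub>G\<^esub> g"
    have "?i \<in> carrier G" "g \<otimes>\<^bsub>G\<^esub> ?i = \<one>\<^bsub>G\<^esub>" using g by simp_all
    hence "L g 1 1 * L ?i 1 1 + L g 1 2 * L ?i 2 1 = 1"
      "L g 1 1 * L ?i 1 2 + L g 1 2 * L ?i 2 2 = 0"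
      "L g 2 1 * L ?i 1 1 + L g 2 2 * L ?i 2 1 = 0"
      "L g 2 1 * L ?i 1 2 + L g 2 2 * L ?i 2 2 = 1"
      using L g unfolding matrix_rep_def by (metis insertCI)+
    hence "(L g 1 1 * L g 2 2 - L g 1 2 * L g 2 1) *
        (L ?i 1 1 * L ?i 2 2 - L ?i 1 2 * L ?i 2 1) = 1"
      unfolding det2_mult by simp
    thus ?thesis by auto
  qed
  show ?thesis using det L unfolding is_GL2_hom_def matrix_rep_def by simp
qed

lemma matrix_rep_diagonal_characters:
  fixes L :: "'g \<Rightarrow> nat \<Rightarrow> nat \<Rightarrow> 'e::field"
  assumes G: "group G" and L: "matrix_rep G L"
    and diag: "\<forall>g\<in>carrier G. L g 1 2 = 0 \<and> L g 2 1 = 0"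
  shows "is_character G (\<lambda>g. L g 1 1)" "is_character G (\<lambda>g. L g 2 2)"
  using matrix_rep_GL2_hom[OF G L] L diag unfolding is_character_def is_GL2_hom_def matrix_rep_def
  by auto

text \<open>For a finite group in characteristic 0, a representation by lower triangular matrices with
  equal diagonal entries is diagonal: L(g^k) has lower entry k a^(k-1) c, and g^|G| = 1.\<close>
lemma matrix_rep_unipotent_trivial:
  fixes L :: "'g \<Rightarrow> nat \<Rightarrow> nat \<Rightarrow> 'e::field_char_0"
  assumes G: "group G" and fin: "finite (carrier G)" and L: "matrix_rep G L"
    and tri: "\<forall>g\<in>carrier G. L g 1 2 = 0 \<and> L g 2 2 = L g 1 1" and g: "g \<in> carrier G"
  shows "L g 2 1 = 0"
proof -
  interpret group G by (rule G)
  define a where "a = L g 1 1"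
  define c where "c = L g 2 1"
  have mult: "L (h \<otimes>\<^bsub>G\<^esub> g) r 1 = L h r 1 * L g 1 1 + L h r 2 * L g 2 1"
    if "h \<in> carrier G" "r \<in> {1,2}" for h r using L that g unfolding matrix_rep_def by blast
  have pow: "L (g [^]\<^bsub>G\<^esub> k) 1 1 = a ^ k \<and> a * L (g [^]\<^bsub>G\<^esub> k) 2 1 = of_nat k * a ^ k * c"
    for k :: nat
  proof (induct k)
    case 0 thus ?case using L unfolding matrix_rep_def by simp
  next
    case (Suc k)
    have gk: "g [^]\<^bsub>G\<^esub> k \<in> carrier G" and s: "g [^]\<^bsub>G\<^esub> Suc k = g [^]\<^bsub>G\<^esub> k \<otimes>\<^bsub>G\<^esub> g"
      using g by simp_all
    have "L (g [^]\<^bsub>G\<^esub> Suc k) 1 1 = a ^ Suc k"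
      using mult[OF gk, of 1] tri gk Suc a_def s by simp
    moreover have "L (g [^]\<^bsub>G\<^esub> Suc k) 2 1 = L (g [^]\<^bsub>G\<^esub> k) 2 1 * a + a ^ k * c"
      using mult[OF gk, of 2] tri gk g Suc a_def c_def s by simp
    hence "a * L (g [^]\<^bsub>G\<^esub> Suc k) 2 1 = of_nat (Suc k) * a ^ Suc k * c"
      using Suc by (simp add: algebra_simps)
    ultimately show ?case by simp
  qed
  have "g [^]\<^bsub>G\<^esub> order G = \<one>\<^bsub>G\<^esub>" using pow_order_eq_1[OF g] .
  hence "a ^ order G = 1" "0 = of_nat (order G) * a ^ order G * c"
    using pow[of "order G"] L unfolding matrix_rep_def by auto
  moreover have "order G > 0" using fin order_gt_0_iff_finite by blast
  ultimately show ?thesis using c_def by simp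
qed


lemma cvec_app [simp]: "cvec c j = c" by (simp add: cvec_def)
lemma cvec_Ef [simp]: "cvec c \<in> Ef f" by (simp add: Ef_def)
lemma Dm_iff: "(a, b) \<in> Dm f \<longleftrightarrow> a \<in> Ef f \<and> b \<in> Ef f" by (simp add: Dm_def)
lemma eta_Dm [simp]: "eta1 \<in> Dm f" "eta2 \<in> Dm f" by (simp_all add: eta1_def eta2_def Dm_def)

lemma smult_Dm [simp]: "a \<in> Ef f \<Longrightarrow> d \<in> Dm f \<Longrightarrow> smult_d a d \<in> Dm f"
  by (cases d) (simp add: smult_d_def Dm_def Ef_def)

lemma add_Dm [simp]: "d \<in> Dm f \<Longrightarrow> d' \<in> Dm f \<Longrightarrow> add_d d d' \<in> Dm f"
  by (cases d, cases d') (simp add: add_d_def Dm_def Ef_def)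

lemma coords_decomp: "((a, b) :: 'e::comm_ring_1 dm) = add_d (smult_d a eta1) (smult_d b eta2)"
  by (simp add: add_d_def smult_d_def eta1_def eta2_def cvec_def)

lemma matr_eq_mat2D:
  assumes "matr T = mat2 A B C D"
  shows "T eta1 = (A, C)" "T eta2 = (B, D)"
proof -
  have "matr T 1 1 = A" "matr T 1 2 = B" "matr T 2 1 = C" "matr T 2 2 = D"
    using assms by (simp_all add: mat2_def)
  thus "T eta1 = (A, C)" "T eta2 = (B, D)" by (simp_all add: matr_def prod_eq_iff)
qed

lemma matr_eq_mat2I:
  assumes "T eta1 = (A, C)" "T eta2 = (B, D)"
  shows "matr T = mat2 A B C D"
  using assms by (auto simp: matr_def mat2_def fun_eq_iff)

definition cmat :: "('e::{zero,one} dm \<Rightarrow> 'e dm) \<Rightarrow> nat \<Rightarrow> nat \<Rightarrow> 'e" where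
  "cmat T r s = matr T r s 0"

definition const_matrix :: "('e::{zero,one} dm \<Rightarrow> 'e dm) \<Rightarrow> bool" where
  "const_matrix T \<longleftrightarrow>
     matr T = mat2 (cvec (cmat T 1 1)) (cvec (cmat T 1 2)) (cvec (cmat T 2 1)) (cvec (cmat T 2 2))"

lemma const_matrixI:
  assumes "T eta1 = (cvec a, cvec c)" "T eta2 = (cvec b, cvec d)"
  shows "const_matrix T \<and> cmat T 1 1 = a \<and> cmat T 1 2 = b \<and> cmat T 2 1 = c \<and> cmat T 2 2 = d"
proof -
  have M: "matr T = mat2 (cvec a) (cvec b) (cvec c) (cvec d)" using matr_eq_mat2I[OF assms] .
  hence "cmat T 1 1 = a \<and> cmat T 1 2 = b \<and> cmat T 2 1 = c \<and> cmat T 2 2 = d"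
    by (simp add: cmat_def mat2_def)
  thus ?thesis using M unfolding const_matrix_def by simp
qed

lemma const_matrixD:
  assumes "const_matrix T"
  shows "T eta1 = (cvec (cmat T 1 1), cvec (cmat T 2 1))"
    "T eta2 = (cvec (cmat T 1 2), cvec (cmat T 2 2))"
  using matr_eq_mat2D assms unfolding const_matrix_def by blast+

locale phiN_module =
  fixes p f G n and Phi N :: "'e::field_char_0 dm \<Rightarrow> 'e dm" and act
  assumes module: "phiN_mod p f G n Phi N act"
begin

lemma f_pos: "f \<ge> 1" using module by (simp add: phiN_mod_def)
lemma grp: "group G" using module by (simp add: phiN_mod_def)
lemma fin: "finite (carrier G)" using module by (simp add: phiN_mod_def)

lemma Phi_add: "d \<in> Dm f \<Longrightarrow> d' \<in> Dm f \<Longrightarrow> Phi (add_d d d') = add_d (Phi d) (Phi d')"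
  using module by (simp add: phiN_mod_def)
lemma Phi_smult: "a \<in> Ef f \<Longrightarrow> d \<in> Dm f \<Longrightarrow> Phi (smult_d a d) = smult_d (shift 1 a) (Phi d)"
  using module by (simp add: phiN_mod_def)
lemma N_smult: "a \<in> Ef f \<Longrightarrow> d \<in> Dm f \<Longrightarrow> N (smult_d a d) = smult_d a (N d)"
  using module by (simp add: phiN_mod_def)
lemma act_Dm: "g \<in> carrier G \<Longrightarrow> d \<in> Dm f \<Longrightarrow> act g d \<in> Dm f"
  using module unfolding phiN_mod_def by blast
lemma act_add:
  "g \<in> carrier G \<Longrightarrow> d \<in> Dm f \<Longrightarrow> d' \<in> Dm f \<Longrightarrow> act g (add_d d d') = add_d (act g d) (act g d')"
  using module by (simp add: phiN_mod_def)
lemma act_cvec: "g \<in> carrier G \<Longrightarrow> d \<in> Dm f \<Longrightarrow> act g (smult_d (cvec c) d) = smult_d (cvec c) (act g d)"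
  using module unfolding phiN_mod_def by blast
lemma act_Phi: "g \<in> carrier G \<Longrightarrow> d \<in> Dm f \<Longrightarrow> act g (Phi d) = Phi (act g d)"
  using module by (simp add: phiN_mod_def)
lemma act_N: "g \<in> carrier G \<Longrightarrow> d \<in> Dm f \<Longrightarrow> act g (N d) = N (act g d)"
  using module by (simp add: phiN_mod_def)
lemma act_one: "d \<in> Dm f \<Longrightarrow> act \<one>\<^bsub>G\<^esub> d = d"
  using module by (simp add: phiN_mod_def)
lemma act_mult:
  "g \<in> carrier G \<Longrightarrow> h \<in> carrier G \<Longrightarrow> d \<in> Dm f \<Longrightarrow> act (g \<otimes>\<^bsub>G\<^esub> h) d = act g (act h d)"
  using module by (simp add: phiN_mod_def)

lemma act_cvec_coords:
  assumes g: "g \<in> carrier G"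
  shows "act g (cvec u, cvec v) = add_d (smult_d (cvec u) (act g eta1)) (smult_d (cvec v) (act g eta2))"
  by (subst coords_decomp) (simp add: act_add act_cvec g)

lemma Phi_coords:
  assumes "a \<in> Ef f" "b \<in> Ef f"
  shows "Phi (a, b) = add_d (smult_d (shift 1 a) (Phi eta1)) (smult_d (shift 1 b) (Phi eta2))"
  by (subst coords_decomp) (simp add: Phi_add Phi_smult assms)

text \<open>The key identity: g Phi = Phi g, written in coordinates for a Frobenius with constant
  matrix (c_rs), is [g](j+1) (c_rs) = (c_rs) [g](j) entrywise.\<close>
lemma commutation_recurrences:
  assumes g: "g \<in> carrier G"
    and P1: "Phi eta1 = (cvec c11, cvec c21)" and P2: "Phi eta2 = (cvec c12, cvec c22)"
    and a1: "act g eta1 = (X1, Y1)" and a2: "act g eta2 = (X2, Y2)"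
  shows "X1 (Suc j) * c11 + Y1 (Suc j) * c12 = c11 * X1 j + c21 * X2 j"
    "X1 (Suc j) * c21 + Y1 (Suc j) * c22 = c11 * Y1 j + c21 * Y2 j"
    "X2 (Suc j) * c11 + Y2 (Suc j) * c12 = c12 * X1 j + c22 * X2 j"
    "X2 (Suc j) * c21 + Y2 (Suc j) * c22 = c12 * Y1 j + c22 * Y2 j"
    "X1 \<in> Ef f" "Y1 \<in> Ef f" "X2 \<in> Ef f" "Y2 \<in> Ef f"
proof -
  have "act g eta1 \<in> Dm f" "act g eta2 \<in> Dm f" using act_Dm g by auto
  thus e: "X1 \<in> Ef f" "Y1 \<in> Ef f" "X2 \<in> Ef f" "Y2 \<in> Ef f" using a1 a2 by (auto simp: Dm_iff)
  have "act g (Phi eta1) = Phi (act g eta1)" by (simp add: act_Phi g)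
  hence "add_d (smult_d (cvec c11) (X1, Y1)) (smult_d (cvec c21) (X2, Y2)) =
    add_d (smult_d (shift 1 X1) (cvec c11, cvec c21)) (smult_d (shift 1 Y1) (cvec c12, cvec c22))"
    using a1 a2 P1 P2 act_cvec_coords[OF g] Phi_coords[OF e(1,2)] by simp
  thus "X1 (Suc j) * c11 + Y1 (Suc j) * c12 = c11 * X1 j + c21 * X2 j"
    "X1 (Suc j) * c21 + Y1 (Suc j) * c22 = c11 * Y1 j + c21 * Y2 j"
    by (auto simp: add_d_def smult_d_def shift_def fun_eq_iff)
  have "act g (Phi eta2) = Phi (act g eta2)" by (simp add: act_Phi g)
  hence "add_d (smult_d (cvec c12) (X1, Y1)) (smult_d (cvec c22) (X2, Y2)) =
    add_d (smult_d (shift 1 X2) (cvec c11, cvec c21)) (smult_d (shift 1 Y2) (cvec c12, cvec c22))"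
    using a1 a2 P1 P2 act_cvec_coords[OF g] Phi_coords[OF e(3,4)] by simp
  thus "X2 (Suc j) * c11 + Y2 (Suc j) * c12 = c12 * X1 j + c22 * X2 j"
    "X2 (Suc j) * c21 + Y2 (Suc j) * c22 = c12 * Y1 j + c22 * Y2 j"
    by (auto simp: add_d_def smult_d_def shift_def fun_eq_iff)
qed

lemma act_matrix_rep:
  assumes C: "\<forall>g\<in>carrier G. const_matrix (act g)"
  shows "matrix_rep G (\<lambda>g. cmat (act g))"
proof -
  have mult: "cmat (act (g \<otimes>\<^bsub>G\<^esub> h)) r s =
      cmat (act g) r 1 * cmat (act h) 1 s + cmat (act g) r 2 * cmat (act h) 2 s"
    if g: "g \<in> carrier G" and h: "h \<in> carrier G" and rs: "r \<in> {1,2}" "s \<in> {1,2}" for g h r s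
  proof -
    note Cg = const_matrixD[of "act g"] and Ch = const_matrixD[of "act h"]
    have "act (g \<otimes>\<^bsub>G\<^esub> h) eta1 =
        add_d (smult_d (cvec (cmat (act h) 1 1)) (act g eta1)) (smult_d (cvec (cmat (act h) 2 1)) (act g eta2))"
      "act (g \<otimes>\<^bsub>G\<^esub> h) eta2 =
        add_d (smult_d (cvec (cmat (act h) 1 2)) (act g eta1)) (smult_d (cvec (cmat (act h) 2 2)) (act g eta2))"
      using act_mult[OF g h] Ch C h act_cvec_coords[OF g] by simp_all
    hence "act (g \<otimes>\<^bsub>G\<^esub> h) eta1 = (cvec (cmat (act g) 1 1 * cmat (act h) 1 1 + cmat (act g) 1 2 * cmat (act h) 2 1),
                                  cvec (cmat (act g) 2 1 * cmat (act h) 1 1 + cmat (act g) 2 2 * cmat (act h) 2 1))"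
      "act (g \<otimes>\<^bsub>G\<^esub> h) eta2 = (cvec (cmat (act g) 1 1 * cmat (act h) 1 2 + cmat (act g) 1 2 * cmat (act h) 2 2),
                                  cvec (cmat (act g) 2 1 * cmat (act h) 1 2 + cmat (act g) 2 2 * cmat (act h) 2 2))"
      using Cg C g by (simp_all add: add_d_def smult_d_def cvec_def algebra_simps)
    from const_matrixI[OF this] show ?thesis using rs by auto
  qed
  have "act \<one>\<^bsub>G\<^esub> eta1 = (cvec 1, cvec 0)" "act \<one>\<^bsub>G\<^esub> eta2 = (cvec 0, cvec 1)"
    using act_one[OF eta_Dm(1)] act_one[OF eta_Dm(2)] by (simp_all add: eta1_def eta2_def)
  from const_matrixI[OF this] mult show ?thesis unfolding matrix_rep_def by simp
qed

lemma diagonal_characters: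
  assumes D: "\<forall>g\<in>carrier G. const_matrix (act g) \<and> cmat (act g) 1 2 = 0 \<and> cmat (act g) 2 1 = 0"
  shows "is_character G (\<lambda>g. cmat (act g) 1 1) \<and> is_character G (\<lambda>g. cmat (act g) 2 2) \<and>
    (\<forall>g\<in>carrier G. matr (act g) = mat2 (cvec (cmat (act g) 1 1)) (cvec 0) (cvec 0) (cvec (cmat (act g) 2 2)))"
proof -
  have R: "matrix_rep G (\<lambda>g. cmat (act g))" using D act_matrix_rep by blast
  have "matr (act g) = mat2 (cvec (cmat (act g) 1 1)) (cvec 0) (cvec 0) (cvec (cmat (act g) 2 2))"
    if g: "g \<in> carrier G" for g
  proof -
    have "const_matrix (act g)" "cmat (act g) 1 2 = 0" "cmat (act g) 2 1 = 0" using D g by auto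
    thus ?thesis unfolding const_matrix_def by simp
  qed
  moreover have "\<forall>g\<in>carrier G. cmat (act g) 1 2 = 0 \<and> cmat (act g) 2 1 = 0" using D by blast
  ultimately show ?thesis using matrix_rep_diagonal_characters[OF grp R] by blast
qed


subsection \<open>The three standard shapes of the Frobenius\<close>

text \<open>Distinct eigenvalue powers: the diagonal entries of [g] are constant, and the
  off-diagonal ones are periodic geometric sequences with ratio (alpha/delta)^(\<plusminus>1).\<close>
lemma shape_diagonal_distinct:
  assumes g: "g \<in> carrier G" and nz: "\<alpha> \<noteq> 0" "\<delta> \<noteq> 0" and ne: "\<alpha> ^ f \<noteq> \<delta> ^ f"
    and P: "matr Phi = mat2 (cvec \<alpha>) (cvec 0) (cvec 0) (cvec \<delta>)"
  shows "const_matrix (act g) \<and> cmat (act g) 1 2 = 0 \<and> cmat (act g) 2 1 = 0"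
proof -
  obtain X1 Y1 X2 Y2 where a: "act g eta1 = (X1, Y1)" "act g eta2 = (X2, Y2)" by fastforce
  note E = commutation_recurrences[OF g matr_eq_mat2D[OF P] a]
  have "\<forall>j. X1 (Suc j) = X1 j" "\<forall>j. Y2 (Suc j) = Y2 j" using E(1,4) nz by simp_all
  hence "X1 = cvec (X1 0)" "Y2 = cvec (Y2 0)" using recurrence_const by (metis cvec_def ext)+
  moreover have "\<forall>j. Y1 (Suc j) = (\<alpha> / \<delta>) * Y1 j" "\<forall>j. X2 (Suc j) = (\<delta> / \<alpha>) * X2 j"
    using E(2,3) nz by (simp_all add: field_simps)
  moreover have "(\<alpha> / \<delta>) ^ f \<noteq> 1" "(\<delta> / \<alpha>) ^ f \<noteq> 1" using ne nz by (simp_all add: power_divide)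
  ultimately have "Y1 j = 0" "X2 j = 0" for j using periodic_geometric_zero E(6,7) by blast+
  hence "Y1 = cvec 0" "X2 = cvec 0" by (auto simp: fun_eq_iff)
  with a \<open>X1 = cvec (X1 0)\<close> \<open>Y2 = cvec (Y2 0)\<close>
  have "act g eta1 = (cvec (X1 0), cvec 0)" "act g eta2 = (cvec 0, cvec (Y2 0))" by simp_all
  from const_matrixI[OF this] show ?thesis by simp
qed

text \<open>Scalar Frobenius: every entry of [g] is shift invariant, hence constant.\<close>
lemma shape_scalar:
  assumes g: "g \<in> carrier G" and nz: "\<alpha> \<noteq> 0"
    and P: "matr Phi = mat2 (cvec \<alpha>) (cvec 0) (cvec 0) (cvec \<alpha>)"
  shows "const_matrix (act g)"
proof -
  obtain X1 Y1 X2 Y2 where a: "act g eta1 = (X1, Y1)" "act g eta2 = (X2, Y2)" by fastforce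
  note E = commutation_recurrences[OF g matr_eq_mat2D[OF P] a]
  have "\<forall>j. X1 (Suc j) = X1 j" "\<forall>j. Y1 (Suc j) = Y1 j" "\<forall>j. X2 (Suc j) = X2 j" "\<forall>j. Y2 (Suc j) = Y2 j"
    using E(1-4) nz by simp_all
  hence "X1 = cvec (X1 0)" "Y1 = cvec (Y1 0)" "X2 = cvec (X2 0)" "Y2 = cvec (Y2 0)"
    using recurrence_const by (metis cvec_def ext)+
  with a have "act g eta1 = (cvec (X1 0), cvec (Y1 0))" "act g eta2 = (cvec (X2 0), cvec (Y2 0))"
    by simp_all
  from const_matrixI[OF this] show ?thesis by simp
qed

text \<open>Jordan block: the recurrences are arithmetic progressions, which in characteristic 0 must
  be constant; [g] becomes constant lower triangular with equal diagonal entries.\<close>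
lemma shape_jordan_triangular:
  assumes g: "g \<in> carrier G" and nz: "\<alpha> \<noteq> 0"
    and P: "matr Phi = mat2 (cvec \<alpha>) (cvec 0) (cvec 1) (cvec \<alpha>)"
  shows "const_matrix (act g) \<and> cmat (act g) 1 2 = 0 \<and> cmat (act g) 2 2 = cmat (act g) 1 1"
proof -
  obtain X1 Y1 X2 Y2 where a: "act g eta1 = (X1, Y1)" "act g eta2 = (X2, Y2)" by fastforce
  note E = commutation_recurrences[OF g matr_eq_mat2D[OF P] a]
  have "\<forall>j. X2 (Suc j) = X2 j" using E(3) nz by simp
  hence X2c: "X2 j = X2 0" for j using recurrence_const by metis
  have "\<forall>j. X1 (Suc j) = X1 j + X2 0 / \<alpha>" using E(1) nz X2c by (simp add: field_simps)
  hence "X2 0 / \<alpha> = 0" using periodic_arithmetic_zero E(5) f_pos by blast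
  hence X20: "X2 = cvec 0" using X2c nz by (simp add: fun_eq_iff)
  have "\<forall>j. X1 (Suc j) = X1 j" "\<forall>j. Y2 (Suc j) = Y2 j" using E(1,4) nz X20 by simp_all
  hence X1c: "X1 j = X1 0" and Y2c: "Y2 j = Y2 0" for j using recurrence_const by metis+
  have Y1step: "\<forall>j. Y1 (Suc j) = Y1 j + (Y2 0 - X1 0) / \<alpha>"
  proof
    fix j
    have "X1 (Suc j) + \<alpha> * Y1 (Suc j) = Y2 j + \<alpha> * Y1 j" using E(2) by (simp add: algebra_simps)
    hence "X1 0 + \<alpha> * Y1 (Suc j) = Y2 0 + \<alpha> * Y1 j" using X1c Y2c by metis
    thus "Y1 (Suc j) = Y1 j + (Y2 0 - X1 0) / \<alpha>" using nz by (simp add: field_simps)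
  qed
  hence "(Y2 0 - X1 0) / \<alpha> = 0" using periodic_arithmetic_zero E(6) f_pos by blast
  hence YX: "Y2 0 = X1 0" using nz by simp
  hence "\<forall>j. Y1 (Suc j) = Y1 j" using Y1step by simp
  hence "Y1 = cvec (Y1 0)" using recurrence_const by (metis cvec_def ext)
  moreover have "X1 = cvec (X1 0)" "Y2 = cvec (X1 0)" using X1c Y2c YX by (auto simp: fun_eq_iff)
  ultimately have "act g eta1 = (cvec (X1 0), cvec (Y1 0))" "act g eta2 = (cvec 0, cvec (X1 0))"
    using a X20 by simp_all
  from const_matrixI[OF this] show ?thesis by simp
qed

text \<open>In the Jordan case the representation is even diagonal, by finiteness of G.\<close>
lemma shape_jordan:
  assumes nz: "\<alpha> \<noteq> 0" and P: "matr Phi = mat2 (cvec \<alpha>) (cvec 0) (cvec 1) (cvec \<alpha>)"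
  shows "\<forall>g\<in>carrier G. const_matrix (act g) \<and> cmat (act g) 1 2 = 0 \<and> cmat (act g) 2 1 = 0 \<and>
           cmat (act g) 2 2 = cmat (act g) 1 1"
proof -
  have T: "\<forall>g\<in>carrier G. const_matrix (act g) \<and> cmat (act g) 1 2 = 0 \<and> cmat (act g) 2 2 = cmat (act g) 1 1"
    using shape_jordan_triangular[OF _ nz P] by blast
  hence "matrix_rep G (\<lambda>g. cmat (act g))" using act_matrix_rep by blast
  thus ?thesis using matrix_rep_unipotent_trivial[OF grp fin] T by blast
qed

lemma N_equal_diagonal:
  assumes g: "g \<in> carrier G"
    and C: "const_matrix (act g)" "cmat (act g) 1 2 = 0" "cmat (act g) 2 1 = 0"
    and NM: "matr N = mat2 (cvec 0) (cvec 0) (cvec 1) (cvec 0)"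
  shows "cmat (act g) 2 2 = cmat (act g) 1 1"
proof -
  let ?a = "cmat (act g) 1 1"
  have Cg: "act g eta1 = smult_d (cvec ?a) eta1" "act g eta2 = (cvec 0, cvec (cmat (act g) 2 2))"
    using const_matrixD[OF C(1)] C(2,3) by (simp_all add: smult_d_def eta1_def cvec_def)
  have "act g eta2 = act g (N eta1)" using matr_eq_mat2D[OF NM] by (simp add: eta2_def)
  also have "\<dots> = smult_d (cvec ?a) (N eta1)" using act_N[OF g] Cg N_smult by simp
  finally show ?thesis using Cg matr_eq_mat2D[OF NM] by (simp add: smult_d_def fun_eq_iff)
qed


subsection \<open>F-semisimplicity of a diagonal Frobenius\<close>

lemma Phi_pow_diagonal:
  assumes P: "matr Phi = mat2 (cvec \<alpha>) (cvec 0) (cvec 0) (cvec \<delta>)" and d: "(a, b) \<in> Dm f"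
  shows "(Phi ^^ k) (a, b) = (\<lambda>j. \<alpha> ^ k * a (j + k), \<lambda>j. \<delta> ^ k * b (j + k))"
proof (induct k)
  case 0 thus ?case by simp
next
  case (Suc k)
  have "(\<lambda>j. \<alpha> ^ k * a (j + k)) \<in> Ef f" "(\<lambda>j. \<delta> ^ k * b (j + k)) \<in> Ef f"
    using d by (auto simp: Dm_iff Ef_def) (metis add.assoc add.commute)+
  with Suc show ?case using Phi_coords matr_eq_mat2D[OF P]
    by (simp add: add_d_def smult_d_def shift_def algebra_simps)
qed

lemma Phi_f_pow_diagonal:
  assumes P: "matr Phi = mat2 (cvec \<alpha>) (cvec 0) (cvec 0) (cvec \<delta>)" and d: "(a, b) \<in> Dm f"
  shows "((Phi ^^ f) ^^ i) (a, b) = (\<lambda>j. (\<alpha> ^ f) ^ i * a j, \<lambda>j. (\<delta> ^ f) ^ i * b j)"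
proof (induct i)
  case 0 thus ?case by simp
next
  case (Suc i)
  have "((\<lambda>j. (\<alpha> ^ f) ^ i * a j), (\<lambda>j. (\<delta> ^ f) ^ i * b j)) \<in> Dm f"
    using d by (auto simp: Dm_iff Ef_def)
  moreover have "a (j + f) = a j" "b (j + f) = b j" for j using d by (auto simp: Dm_iff Ef_def)
  ultimately show ?case using Suc Phi_pow_diagonal[OF P] by (simp add: algebra_simps)
qed

lemma op_poly_diagonal:
  assumes P: "matr Phi = mat2 (cvec \<alpha>) (cvec 0) (cvec 0) (cvec \<delta>)" and d: "(a, b) \<in> Dm f"
  shows "op_poly q (Phi ^^ f) (a, b) = (\<lambda>j. poly q (\<alpha> ^ f) * a j, \<lambda>j. poly q (\<delta> ^ f) * b j)"
  unfolding op_poly_def Phi_f_pow_diagonal[OF P d] poly_altdef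
  by (simp add: sum_distrib_right sum_distrib_left algebra_simps)

lemma scalar_F_scalar:
  assumes nz: "\<alpha> \<noteq> 0" and P: "matr Phi = mat2 (cvec \<alpha>) (cvec 0) (cvec 0) (cvec \<alpha>)"
  shows "F_scalar f Phi"
  unfolding F_scalar_def
proof (intro exI conjI ballI)
  show "\<alpha> ^ f \<noteq> 0" using nz by simp
  fix d :: "'e dm" assume "d \<in> Dm f"
  then show "(Phi ^^ f) d = smult_d (cvec (\<alpha> ^ f)) d"
    using Phi_f_pow_diagonal[OF P, of "fst d" "snd d" 1] by (simp add: smult_d_def)
qed

text \<open>A diagonal Frobenius is killed by the squarefree polynomial (X - alpha^f)(X - delta^f),
  or by X - alpha^f if the two powers coincide.\<close>
lemma diagonal_F_semisimple:
  assumes P: "matr Phi = mat2 (cvec \<alpha>) (cvec 0) (cvec 0) (cvec \<delta>)"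
  shows "F_semisimple f Phi"
proof -
  define q where "q = (if \<alpha> ^ f = \<delta> ^ f then [:-(\<alpha> ^ f), 1:] else [:-(\<alpha> ^ f), 1:] * [:-(\<delta> ^ f), 1:])"
  have "q \<noteq> 0" "squarefree q"
    unfolding q_def using squarefree_linear squarefree_two_linear by auto
  moreover have "poly q (\<alpha> ^ f) = 0" "poly q (\<delta> ^ f) = 0" by (simp_all add: q_def)
  hence "op_poly q (Phi ^^ f) d = zero_d" if "d \<in> Dm f" for d
    using op_poly_diagonal[OF P, of "fst d" "snd d" q] that by (simp add: zero_d_def cvec_def)
  ultimately show ?thesis unfolding F_semisimple_def by blast
qed


context
  assumes std: "std_basis p f Phi N"
begin

lemma std_shapes:
  obtains (distinct) \<alpha> \<delta> where "\<alpha> \<noteq> 0" "\<delta> \<noteq> 0" "\<alpha> ^ f \<noteq> \<delta> ^ f"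
      "matr Phi = mat2 (cvec \<alpha>) (cvec 0) (cvec 0) (cvec \<delta>)"
  | (scalar) \<alpha> where "\<alpha> \<noteq> 0" "matr Phi = mat2 (cvec \<alpha>) (cvec 0) (cvec 0) (cvec \<alpha>)"
  | (jordan) \<alpha> where "\<alpha> \<noteq> 0" "matr Phi = mat2 (cvec \<alpha>) (cvec 0) (cvec 1) (cvec \<alpha>)"
  using std unfolding std_basis_def by blast

text \<open>Part (2) holds in every case, since [g] is always constant.\<close>
lemma case_GL2:
  "\<exists>L. is_GL2_hom G L \<and> (\<forall>g\<in>carrier G. matr (act g) =
      mat2 (cvec (L g 1 1)) (cvec (L g 1 2)) (cvec (L g 2 1)) (cvec (L g 2 2)))"
proof -
  have C: "\<forall>g\<in>carrier G. const_matrix (act g)"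
  proof (cases rule: std_shapes)
    case (distinct \<alpha> \<delta>)
    then show ?thesis using shape_diagonal_distinct[OF _ distinct] by blast
  next
    case (scalar \<alpha>)
    then show ?thesis using shape_scalar[OF _ scalar] by blast
  next
    case (jordan \<alpha>)
    then show ?thesis using shape_jordan[OF jordan] by blast
  qed
  have "is_GL2_hom G (\<lambda>g. cmat (act g))" using matrix_rep_GL2_hom[OF grp act_matrix_rep[OF C]] .
  with C show ?thesis unfolding const_matrix_def by (intro exI[of _ "\<lambda>g. cmat (act g)"]) simp
qed

text \<open>Part (3): a non-F-semisimple module has the Jordan shape.\<close>
lemma case_non_semisimple:
  assumes "\<not> F_semisimple f Phi"
  shows "\<exists>\<chi>. is_character G \<chi> \<and>
    (\<forall>g\<in>carrier G. matr (act g) = mat2 (cvec (\<chi> g)) (cvec 0) (cvec 0) (cvec (\<chi> g)))"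
proof (cases rule: std_shapes)
  case (jordan \<alpha>)
  note J = shape_jordan[OF jordan]
  hence "\<forall>g\<in>carrier G. const_matrix (act g) \<and> cmat (act g) 1 2 = 0 \<and> cmat (act g) 2 1 = 0" by blast
  from diagonal_characters[OF this] J show ?thesis
    by (intro exI[of _ "\<lambda>g. cmat (act g) 1 1"]) simp
qed (use assms diagonal_F_semisimple in simp)+

text \<open>Part (1a): for N \<noteq> 0 the shape is diag(p delta, delta) and N identifies the characters.\<close>
lemma case_N_nonzero:
  assumes p: "prime p" and NZ: "N_nonzero f N"
  shows "\<exists>\<chi>. is_character G \<chi> \<and>
    (\<forall>g\<in>carrier G. matr (act g) = mat2 (cvec (\<chi> g)) (cvec 0) (cvec 0) (cvec (\<chi> g)))"
proof -
  obtain \<delta> where d: "\<delta> \<noteq> 0" "matr Phi = mat2 (cvec (of_nat p * \<delta>)) (cvec 0) (cvec 0) (cvec \<delta>)"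
    and NM: "matr N = mat2 (cvec 0) (cvec 0) (cvec 1) (cvec 0)"
    using std NZ unfolding std_basis_def by blast
  have "of_nat p * \<delta> \<noteq> 0" using d(1) p prime_gt_0_nat by simp
  hence D: "\<forall>g\<in>carrier G. const_matrix (act g) \<and> cmat (act g) 1 2 = 0 \<and> cmat (act g) 2 1 = 0"
    using shape_diagonal_distinct[OF _ _ d(1) prime_times_pow_ne[OF p f_pos d(1)] d(2)] by blast
  hence "\<forall>g\<in>carrier G. cmat (act g) 2 2 = cmat (act g) 1 1" using N_equal_diagonal[OF _ _ _ _ NM] by simp
  with diagonal_characters[OF D] show ?thesis by (intro exI[of _ "\<lambda>g. cmat (act g) 1 1"]) simp
qed

lemma case_not_scalar:
  assumes "\<not> F_scalar f Phi"
  shows "\<exists>\<chi> \<psi>. is_character G \<chi> \<and> is_character G \<psi> \<and>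
    (\<forall>g\<in>carrier G. matr (act g) = mat2 (cvec (\<chi> g)) (cvec 0) (cvec 0) (cvec (\<psi> g)))"
proof -
  have "\<forall>g\<in>carrier G. const_matrix (act g) \<and> cmat (act g) 1 2 = 0 \<and> cmat (act g) 2 1 = 0"
  proof (cases rule: std_shapes)
    case (distinct \<alpha> \<delta>)
    then show ?thesis using shape_diagonal_distinct[OF _ distinct] by blast
  next
    case (scalar \<alpha>)
    then show ?thesis using assms scalar_F_scalar[OF scalar] by blast
  next
    case (jordan \<alpha>)
    then show ?thesis using shape_jordan[OF jordan] by blast
  qed
  from diagonal_characters[OF this] show ?thesis
    by (intro exI[of _ "\<lambda>g. cmat (act g) 1 1"] exI[of _ "\<lambda>g. cmat (act g) 2 2"]) simp
qed

end

end


theorem proposition2p7: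
  fixes p f :: nat and G :: "('g, 'b) monoid_scheme" and n :: "'g \<Rightarrow> nat"
    and Phi N :: "'e::field_char_0 dm \<Rightarrow> 'e dm" and act :: "'g \<Rightarrow> 'e dm \<Rightarrow> 'e dm"
  assumes "prime p"
    and "phiN_mod p f G n Phi N act"
    and "std_basis p f Phi N"
  shows "(F_semisimple f Phi \<and> \<not> F_scalar f Phi \<longrightarrow>
            (N_nonzero f N \<longrightarrow>
               (\<exists>\<chi>. is_character G \<chi> \<and>
                  (\<forall>g\<in>carrier G. matr (act g) = mat2 (cvec (\<chi> g)) (cvec 0) (cvec 0) (cvec (\<chi> g))))) \<and>
            (\<not> N_nonzero f N \<longrightarrow>
               (\<exists>\<chi> \<psi>. is_character G \<chi> \<and> is_character G \<psi> \<and>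
                  (\<forall>g\<in>carrier G. matr (act g) = mat2 (cvec (\<chi> g)) (cvec 0) (cvec 0) (cvec (\<psi> g))))))
       \<and> (F_scalar f Phi \<longrightarrow>
            (\<exists>L. is_GL2_hom G L \<and>
               (\<forall>g\<in>carrier G. matr (act g) =
                  mat2 (cvec (L g 1 1)) (cvec (L g 1 2)) (cvec (L g 2 1)) (cvec (L g 2 2)))))
       \<and> (\<not> F_semisimple f Phi \<longrightarrow>
            (\<exists>\<chi>. is_character G \<chi> \<and>
               (\<forall>g\<in>carrier G. matr (act g) = mat2 (cvec (\<chi> g)) (cvec 0) (cvec 0) (cvec (\<chi> g)))))"
proof -
  interpret phiN_module p f G n Phi N act using assms(2) by (rule phiN_module.intro)
  note parts = case_N_nonzero[OF assms(3,1)] case_not_scalar[OF assms(3)]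
    case_GL2[OF assms(3)] case_non_semisimple[OF assms(3)]
  show ?thesis using parts by blast
qed

end
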